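(* Let $1\le k<n$ and let $X$ be a fixed (non-random) real $n\times k$ matrix of full column rank $k$. Let $\mathbf{F}_2$ be the class of all distributions $F$ of the random vector $Y=X\beta+e$ in $\mathbb{R}^n$, where $\beta$ ranges over $\mathbb{R}^k$ and the distribution of the error vector $e$ ranges over all distributions on $\mathbb{R}^n$ with $E e'e<\infty$, $Ee=0$ and $Eee'=\sigma^2\Sigma$ for some $0<\sigma^2<\infty$ and some symmetric positive definite $n\times n$ matrix $\Sigma$. For $F\in\mathbf{F}_2$, let $\beta(F)$ denote the (unique) $\beta\in\mathbb{R}^k$ with $E_F Y = X\beta$. Suppose $\hat\beta:\mathbb{R}^n\to\mathbb{R}^k$ is a Borel-measurable function such that, for every $F\in\mathbf{F}_2$, $E_F\hat\beta(Y)$ exists and $E_F\hat\beta(Y)=\beta(F)$. Then $\hat\beta$ is linear, i.e., there is a $k\times n$ real matrix $A$ with $\hat\beta(y)=Ay$ for all $y\in\mathbb{R}^n$.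
   Context: $E_F$ denotes expectation when $Y$ has distribution $F$. Since $X$ has full column rank, $\beta(F)$ is uniquely determined by $F$. *)

theory Defs
  imports "HOL-Probability.Probability"
begin

definition sym_pos_def_matrix :: "real^'n^'n \<Rightarrow> bool" where
  "sym_pos_def_matrix S \<longleftrightarrow> transpose S = S \<and> (\<forall>x. x \<noteq> 0 \<longrightarrow> x \<bullet> (S *v x) > 0)"

definition error_dist :: "(real^'n) measure \<Rightarrow> bool" where
  "error_dist P \<longleftrightarrow> prob_space P \<and> sets P = sets borel \<and>
     integrable P (\<lambda>e. e \<bullet> e) \<and>
     integrable P (\<lambda>e. e) \<and> (\<integral>e. e \<partial>P) = 0 \<and>
     (\<exists>\<sigma>2 \<Sigma>. 0 < \<sigma>2 \<and> sym_pos_def_matrix \<Sigma> \<and>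
        (\<forall>i j. (\<integral>e. e $ i * e $ j \<partial>P) = \<sigma>2 * \<Sigma> $ i $ j))"

definition F2 :: "real^'k^'n \<Rightarrow> (real^'n) measure set" where
  "F2 X = {distr P borel (\<lambda>e. X *v \<beta> + e) | \<beta> P. error_dist P}"

definition beta_of :: "real^'k^'n \<Rightarrow> (real^'n) measure \<Rightarrow> real^'k" where
  "beta_of X F = (THE \<beta>. (\<integral>y. y \<partial>F) = X *v \<beta>)"

end

theory Submission
  imports Defs
begin

(* A finitely supported law with mean zero and positive definite second-moment matrix is an
   admissible error law, and with beta = 0 it is itself in F_2; unbiasedness therefore forces
   betahat to average to zero against it. Mixing with the uniform law on the signed unit
   vectors removes the positive-definiteness requirement, so betahat averages to zero against
   every centred finitely supported law. Two-point laws then give betahat (- t y) = - t betahat y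
   for t > 0, and the uniform law on y, z, -(y + z) gives additivity. *)

definition prob_weights :: "'i set \<Rightarrow> ('i \<Rightarrow> real) \<Rightarrow> bool" where
  "prob_weights I w \<longleftrightarrow> finite I \<and> (\<forall>i\<in>I. 0 \<le> w i) \<and> sum w I = 1"

definition weights_pmf :: "'i set \<Rightarrow> ('i \<Rightarrow> real) \<Rightarrow> 'i pmf" where
  "weights_pmf I w = embed_pmf (\<lambda>i. if i \<in> I then w i else 0)"

lemma pmf_weights_pmf:
  assumes "prob_weights I w"
  shows "pmf (weights_pmf I w) i = (if i \<in> I then w i else 0)"
proof -
  have "(\<integral>\<^sup>+i. ennreal (if i \<in> I then w i else 0) \<partial>count_space UNIV) = 1"
    using assms nn_integral_count_space'[of I UNIV "\<lambda>i. ennreal (if i \<in> I then w i else 0)"]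
    by (simp add: prob_weights_def sum_ennreal)
  then show ?thesis
    using assms pmf_embed_pmf[of "\<lambda>i. if i \<in> I then w i else 0"]
    by (simp add: weights_pmf_def prob_weights_def)
qed

lemma set_weights_pmf_subset:
  assumes "prob_weights I w"
  shows "set_pmf (weights_pmf I w) \<subseteq> I"
  using assms by (auto simp: set_pmf_iff pmf_weights_pmf split: if_splits)

lemma integral_weights_pmf:
  fixes f :: "'i \<Rightarrow> 'b::{banach, second_countable_topology}"
  assumes "prob_weights I w"
  shows "(\<integral>i. f i \<partial>weights_pmf I w) = (\<Sum>i\<in>I. w i *\<^sub>R f i)"
  using assms integral_measure_pmf[of I "weights_pmf I w" f] set_weights_pmf_subset[OF assms]
  by (auto simp: prob_weights_def pmf_weights_pmf)

lemma inner_weighted_outer_product_sum: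
  fixes x :: "real^'n" and g :: "'i \<Rightarrow> real^'n"
  assumes "finite I"
  shows "x \<bullet> ((\<chi> j k. \<Sum>i\<in>I. w i * (g i $ j * g i $ k)) *v x) = (\<Sum>i\<in>I. w i * (x \<bullet> g i)\<^sup>2)"
proof -
  have "x \<bullet> ((\<chi> j k. \<Sum>i\<in>I. w i * (g i $ j * g i $ k)) *v x)
      = (\<Sum>j\<in>UNIV. \<Sum>k\<in>UNIV. \<Sum>i\<in>I. w i * (x $ j * g i $ j) * (x $ k * g i $ k))"
    by (simp add: inner_vec_def matrix_vector_mult_def sum_distrib_left sum_distrib_right mult_ac)
  also have "\<dots> = (\<Sum>i\<in>I. \<Sum>j\<in>UNIV. \<Sum>k\<in>UNIV. w i * (x $ j * g i $ j) * (x $ k * g i $ k))"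
    by (simp add: sum.swap[where A = I])
  also have "\<dots> = (\<Sum>i\<in>I. w i * (x \<bullet> g i)\<^sup>2)"
    by (simp add: inner_vec_def power2_eq_square sum_product sum_distrib_left mult_ac)
  finally show ?thesis .
qed

lemma finite_centred_error_dist:
  fixes w :: "'i \<Rightarrow> real" and g :: "'i \<Rightarrow> real^'n"
  assumes weights: "prob_weights I w"
    and centred: "(\<Sum>i\<in>I. w i *\<^sub>R g i) = 0"
    and pos_def: "\<And>x. x \<noteq> 0 \<Longrightarrow> 0 < (\<Sum>i\<in>I. w i * (x \<bullet> g i)\<^sup>2)"
  shows "error_dist (distr (weights_pmf I w) borel g)"
proof -
  define P where "P = distr (weights_pmf I w) borel g"
  have g_meas: "g \<in> measurable (weights_pmf I w) borel" by simp
  have integral_P: "(\<integral>y. f y \<partial>P) = (\<Sum>i\<in>I. w i *\<^sub>R f (g i))"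
    if "f \<in> borel_measurable borel" for f :: "real^'n \<Rightarrow> 'c::{banach, second_countable_topology}"
    using integral_distr[OF g_meas that] integral_weights_pmf[OF weights] by (simp add: P_def)
  have integrable_P: "integrable P f"
    if "f \<in> borel_measurable borel" for f :: "real^'n \<Rightarrow> 'c::{banach, second_countable_topology}"
    using integrable_distr_eq[OF g_meas that] weights set_weights_pmf_subset[OF weights]
    by (auto simp: P_def prob_weights_def intro: integrable_measure_pmf_finite finite_subset)
  have "finite I" using weights by (simp add: prob_weights_def)
  define S :: "real^'n^'n" where "S = (\<chi> j k. \<Sum>i\<in>I. w i * (g i $ j * g i $ k))"
  have "transpose S = S"
    by (simp add: S_def transpose_def mult.commute)
  moreover have "x \<bullet> (S *v x) > 0" if "x \<noteq> 0" for x
    unfolding S_def inner_weighted_outer_product_sum[OF \<open>finite I\<close>] using pos_def[OF that] .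
  ultimately have "sym_pos_def_matrix S"
    by (simp add: sym_pos_def_matrix_def)
  moreover have "(\<integral>e. e $ j * e $ k \<partial>P) = 1 * S $ j $ k" for j k
    using integral_P[of "\<lambda>e. e $ j * e $ k"] by (simp add: S_def)
  ultimately have "\<exists>\<sigma>2 \<Sigma>. 0 < \<sigma>2 \<and> sym_pos_def_matrix \<Sigma> \<and>
      (\<forall>j k. (\<integral>e. e $ j * e $ k \<partial>P) = \<sigma>2 * \<Sigma> $ j $ k)"
    by (intro exI[of _ "1::real"] exI[of _ S]) simp
  moreover have "prob_space P" and "sets P = sets borel"
    using prob_space.prob_space_distr[OF prob_space_measure_pmf g_meas] by (simp_all add: P_def)
  moreover have "(\<integral>e. e \<partial>P) = 0"
    using integral_P[of "\<lambda>e. e"] centred by simp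
  moreover have "integrable P (\<lambda>e. e \<bullet> e)" and "integrable P (\<lambda>e. e)"
    by (rule integrable_P, simp)+
  ultimately have "error_dist P"
    unfolding error_dist_def by blast
  then show ?thesis by (simp only: P_def)
qed

lemma beta_of_eqI:
  fixes X :: "real^'k^'n"
  assumes "rank X = CARD('k)" and "(\<integral>y. y \<partial>F) = X *v \<beta>"
  shows "beta_of X F = \<beta>"
  unfolding beta_of_def
proof (rule the_equality)
  show "\<beta>' = \<beta>" if "(\<integral>y. y \<partial>F) = X *v \<beta>'" for \<beta>'
    using that assms full_rank_injective[of X] by (metis injD)
qed (fact assms(2))

lemma error_dist_in_F2:
  assumes "error_dist P"
  shows "P \<in> F2 X"
proof -
  have "P = distr P borel (\<lambda>e. X *v 0 + e)"
    using assms distr_id2[of borel P] by (simp add: error_dist_def)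
  with assms show ?thesis unfolding F2_def by blast
qed

lemma linear_if_centred_averages_preserved:
  fixes f :: "'a::real_vector \<Rightarrow> 'b::real_vector"
  assumes centred: "\<And>(I :: nat set) w g. prob_weights I w \<Longrightarrow>
      (\<Sum>i\<in>I. w i *\<^sub>R g i) = 0 \<Longrightarrow> (\<Sum>i\<in>I. w i *\<^sub>R f (g i)) = 0"
  shows "linear f"
proof -
  have centred_unnormalised: "(\<Sum>i\<in>I. w i *\<^sub>R f (g i)) = 0"
    if "finite I" "\<And>i. i \<in> I \<Longrightarrow> 0 \<le> w i" "0 < sum w I" "(\<Sum>i\<in>I. w i *\<^sub>R g i) = 0"
    for I :: "nat set" and w g
  proof -
    have rescale: "(\<Sum>i\<in>I. (w i / sum w I) *\<^sub>R h i) = inverse (sum w I) *\<^sub>R (\<Sum>i\<in>I. w i *\<^sub>R h i)"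
      for h :: "nat \<Rightarrow> 'c::real_vector"
      by (simp add: scaleR_sum_right divide_inverse mult.commute)
    have "(\<Sum>i\<in>I. (w i / sum w I) *\<^sub>R f (g i)) = 0"
      by (rule centred)
        (use that in \<open>auto simp: prob_weights_def rescale sum_divide_distrib[symmetric]\<close>)
    with that(3) show ?thesis by (simp add: rescale)
  qed
  have zero: "f 0 = 0"
    using centred_unnormalised[of "{0}" "\<lambda>_. 1" "\<lambda>_. 0"] by simp
  have neg_scale: "f (- (t *\<^sub>R y)) = - (t *\<^sub>R f y)" if "0 < t" for t y
  proof -
    have "t *\<^sub>R f y + f (- (t *\<^sub>R y)) = 0"
      using centred_unnormalised[of "{0, 1}" "\<lambda>i. if i = 0 then t else 1" "\<lambda>i. if i = 0 then y else - (t *\<^sub>R y)"] that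
      by simp
    then show ?thesis by (simp add: eq_neg_iff_add_eq_0 add.commute)
  qed
  have odd: "f (- y) = - f y" for y
    using neg_scale[of 1 y] by simp
  have scale: "f (t *\<^sub>R y) = t *\<^sub>R f y" for t y
  proof -
    consider "0 < t" | "t = 0" | "t < 0" by fastforce
    then show ?thesis
    proof cases
      case 1
      then show ?thesis using neg_scale[of t y] odd[of "t *\<^sub>R y"] by simp
    next
      case 2
      then show ?thesis using zero by simp
    next
      case 3
      then show ?thesis using neg_scale[of "- t" y] by simp
    qed
  qed
  have add: "f (y + z) = f y + f z" for y z
  proof -
    have "f y + f z + f (- (y + z)) = 0"
      using centred_unnormalised[of "{0, 1, 2}" "\<lambda>_. 1" "\<lambda>i. if i = 0 then y else if i = 1 then z else - (y + z)"]
      by (simp add: add.assoc)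
    then have "f y + f z - f (y + z) = 0"
      using odd[of "y + z"] by simp
    then show ?thesis by simp
  qed
  show ?thesis by (rule linearI) (simp_all add: add scale)
qed

lemma sum_signed_axes:
  "(\<Sum>(j, b)\<in>UNIV. axis j (if b then 1 else -1)) = (0 :: 'a::ring_1^'n)"
proof -
  have "axis j (-1) + axis j 1 = (0 :: 'a^'n)" for j
    by (simp add: axis_def vec_eq_iff)
  then show ?thesis
    by (simp add: UNIV_Times_UNIV[symmetric] sum.cartesian_product[symmetric] UNIV_bool)
qed

lemma sum_sq_inner_signed_axes_pos:
  fixes x :: "real^'n"
  assumes "x \<noteq> 0"
  shows "0 < (\<Sum>(j, b)\<in>UNIV. (x \<bullet> axis j (if b then 1 else -1))\<^sup>2)"
proof -
  obtain j where "x $ j \<noteq> 0"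
    using assms by (metis vec_eq_iff zero_index)
  then show ?thesis
    by (intro sum_pos2[where i = "(j, True)"]) (auto simp: inner_axis)
qed

locale unbiased_estimator =
  fixes X :: "real^'k^'n" and betahat :: "real^'n \<Rightarrow> real^'k"
  assumes full_rank: "rank X = CARD('k)"
    and betahat_borel: "betahat \<in> borel_measurable borel"
    and unbiased: "\<And>F. F \<in> F2 X \<Longrightarrow> integrable F betahat \<and> (\<integral>y. betahat y \<partial>F) = beta_of X F"
begin

lemma integral_error_dist_eq_0:
  assumes "error_dist P"
  shows "(\<integral>y. betahat y \<partial>P) = 0"
proof -
  have "(\<integral>y. betahat y \<partial>P) = beta_of X P"
    using unbiased error_dist_in_F2[OF assms] by blast
  also have "\<dots> = 0"
    by (rule beta_of_eqI[OF full_rank]) (use assms in \<open>simp add: error_dist_def\<close>)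
  finally show ?thesis .
qed

lemma pos_def_centred_weighted_sum_eq_0:
  fixes w :: "'i \<Rightarrow> real" and g :: "'i \<Rightarrow> real^'n"
  assumes weights: "prob_weights I w"
    and "(\<Sum>i\<in>I. w i *\<^sub>R g i) = 0"
    and "\<And>x. x \<noteq> 0 \<Longrightarrow> 0 < (\<Sum>i\<in>I. w i * (x \<bullet> g i)\<^sup>2)"
  shows "(\<Sum>i\<in>I. w i *\<^sub>R betahat (g i)) = 0"
proof -
  have g_meas: "g \<in> measurable (weights_pmf I w) borel" by simp
  have "(\<Sum>i\<in>I. w i *\<^sub>R betahat (g i)) = (\<integral>y. betahat y \<partial>distr (weights_pmf I w) borel g)"
    using integral_distr[OF g_meas betahat_borel] integral_weights_pmf[OF weights, of "\<lambda>i. betahat (g i)"]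
    by simp
  also have "\<dots> = 0"
    by (rule integral_error_dist_eq_0[OF finite_centred_error_dist[OF assms]])
  finally show ?thesis .
qed

lemma centred_weighted_sum_eq_0:
  fixes w :: "'i \<Rightarrow> real" and g :: "'i \<Rightarrow> real^'n"
  assumes weights: "prob_weights I w" and centred: "(\<Sum>i\<in>I. w i *\<^sub>R g i) = 0"
  shows "(\<Sum>i\<in>I. w i *\<^sub>R betahat (g i)) = 0"
proof -
  have "finite I" "\<And>i. i \<in> I \<Longrightarrow> 0 \<le> w i" "sum w I = 1"
    using weights by (auto simp: prob_weights_def)
  define e :: "'n \<times> bool \<Rightarrow> real^'n" where "e = (\<lambda>(j, b). axis j (if b then 1 else -1))"
  define c where "c = 1 / real CARD('n \<times> bool)"
  have "0 < c" by (simp add: c_def)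
  have e_centred: "(\<Sum>jb\<in>UNIV. c *\<^sub>R e jb) = 0"
    by (simp add: sum_signed_axes e_def scaleR_sum_right[symmetric])
  have e_pos_def: "0 < (\<Sum>jb\<in>UNIV. c * (x \<bullet> e jb)\<^sup>2)" if "x \<noteq> 0" for x
    using sum_sq_inner_signed_axes_pos[OF that] \<open>0 < c\<close>
    by (simp add: e_def sum_distrib_left[symmetric] case_prod_unfold)
  have axes: "(\<Sum>jb\<in>UNIV. c *\<^sub>R betahat (e jb)) = 0"
    by (rule pos_def_centred_weighted_sum_eq_0) (use e_centred e_pos_def in \<open>simp_all add: prob_weights_def c_def\<close>)
  define v :: "'i + 'n \<times> bool \<Rightarrow> real" where "v = case_sum (\<lambda>i. w i / 2) (\<lambda>_. c / 2)"
  define h where "h = case_sum g e"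
  have split: "(\<Sum>k\<in>I <+> UNIV. v k *\<^sub>R \<phi> (h k))
      = (1/2) *\<^sub>R (\<Sum>i\<in>I. w i *\<^sub>R \<phi> (g i)) + (1/2) *\<^sub>R (\<Sum>jb\<in>UNIV. c *\<^sub>R \<phi> (e jb))"
    for \<phi> :: "real^'n \<Rightarrow> 'c::real_vector"
    using \<open>finite I\<close> by (simp add: sum.Plus v_def h_def scaleR_sum_right)
  have "(\<Sum>k\<in>I <+> UNIV. v k *\<^sub>R betahat (h k)) = 0"
  proof (rule pos_def_centred_weighted_sum_eq_0)
    have "sum v (I <+> UNIV) = 1"
      using split[of "\<lambda>_. 1 :: real"] \<open>sum w I = 1\<close> by (simp add: c_def)
    then show "prob_weights (I <+> UNIV) v"
      using \<open>finite I\<close> \<open>\<And>i. i \<in> I \<Longrightarrow> 0 \<le> w i\<close> \<open>0 < c\<close>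
      by (auto simp: prob_weights_def v_def split: sum.split)
    show "(\<Sum>k\<in>I <+> UNIV. v k *\<^sub>R h k) = 0"
      using split[of "\<lambda>y. y"] centred e_centred by simp
    show "0 < (\<Sum>k\<in>I <+> UNIV. v k * (x \<bullet> h k)\<^sup>2)" if "x \<noteq> 0" for x
    proof -
      have "0 \<le> (\<Sum>i\<in>I. w i * (x \<bullet> g i)\<^sup>2)"
        using \<open>\<And>i. i \<in> I \<Longrightarrow> 0 \<le> w i\<close> by (simp add: sum_nonneg)
      then show ?thesis
        using split[of "\<lambda>y. (x \<bullet> y)\<^sup>2"] e_pos_def[OF that] by simp
    qed
  qed
  with split[of betahat] axes show ?thesis by simp
qed

lemma linear_betahat: "linear betahat"
  by (rule linear_if_centred_averages_preserved) (rule centred_weighted_sum_eq_0)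

end

theorem theorem3p4:
  fixes X :: "real^'k^'n"
    and betahat :: "real^'n \<Rightarrow> real^'k"
  assumes "CARD('k) < CARD('n)"
    and "rank X = CARD('k)"
    and "betahat \<in> borel_measurable borel"
    and "\<And>F. F \<in> F2 X \<Longrightarrow> integrable F betahat \<and> (\<integral>y. betahat y \<partial>F) = beta_of X F"
  shows "\<exists>A :: real^'n^'k. \<forall>y. betahat y = A *v y"
proof -
  interpret unbiased_estimator X betahat
    using assms(2-4) by unfold_locales
  have "Vector_Spaces.linear (*s) (*s) betahat"
    using linear_betahat by (simp add: linear_matrix_vector_mul_eq)
  then show ?thesis
    using matrix_works by metis
qed

end
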